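(* Let $p>3$ be a prime and $\delta\in\{\pm1\}$. If $p\equiv1\pmod4$, then $$T_p(2,5\delta,2)\equiv(-1)^{\lfloor(p+11)/12\rfloor}\pmod p.$$ If $p\equiv3\pmod4$, then $$T_p(2,5\delta,2)\equiv\left(\frac{6}{p}\right)\frac{\delta\,2^\delta}{3^\delta}\binom{(p-3)/2}{(p-3)/4}^{-2\delta}\pmod p.$$
   Context: $\left(\frac{\cdot}{p}\right)$ denotes the Legendre symbol. For an odd prime $p$ and $a,b,c\in\mathbb{Z}$, $T_p(a,b,c)=\prod_{i,j=1,\ p\nmid ai^2+bij+cj^2}^{(p-1)/2}(ai^2+bij+cj^2)$. Negative powers and fractions are interpreted as inverses modulo $p$. *)

theory Defs
  imports "HOL-Number_Theory.Number_Theory"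
begin

definition qf :: "int \<Rightarrow> int \<Rightarrow> int \<Rightarrow> int \<Rightarrow> int \<Rightarrow> int" where
  "qf a b c i j = a * i^2 + b * i * j + c * j^2"

definition T :: "nat \<Rightarrow> int \<Rightarrow> int \<Rightarrow> int \<Rightarrow> int" where
  "T p a b c =
     (\<Prod>(i,j) \<in> {(i,j). i \<in> {1..(p-1) div 2} \<and> j \<in> {1..(p-1) div 2}
                        \<and> \<not> int p dvd qf a b c (int i) (int j)}.
        qf a b c (int i) (int j))"

end

theory Submission
  imports Defs
begin

(* Reflecting j to p - j turns the factors of T(2,-5,2) into the values of 2i^2 + 5ij + 2j^2 with
   (p+1)/2 <= j <= p-1, so T(2,5,2) T(2,-5,2) is a product of complete rows
   prod_{j=1}^{p-1} (2i+j)(i+2j).  In a row each linear factor runs over all nonzero residues but one,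
   so Wilson's theorem evaluates it, and T(2,5,2) T(2,-5,2) = (-1)^((p-1)/2) (mod p).
   Since 2i^2 + 5ij + 2j^2 = (2i+j)(i+2j) and the index set is symmetric in i and j, T(2,5,2) is
   the square of the product P of the factors 2i+j alone.  For fixed i, the product of the 2i+j is a
   quotient of factorials with the factor p left out, times one surplus factor congruent to 3i/2 when
   i is odd; over all rows the factorials telescope.  Wilson's theorem, Fermat's little theorem and
   Euler's criterion then express P^2 by the Legendre symbols of 2, 3 and 6 and, for p = 3 (mod 4),
   by the central binomial coefficient ((p-3)/2 choose (p-3)/4). *)

lemma prod_atLeastAtMost_add_split:
  fixes f :: "nat \<Rightarrow> 'a::comm_monoid_mult"
  shows "(\<Prod>i\<in>{1..a+b}. f i) = (\<Prod>i\<in>{1..a}. f i) * (\<Prod>i\<in>{1..b}. f (a+i))"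
  by (induction b) (auto simp: atLeastAtMostSuc_conv algebra_simps)

lemma prod_even_neutral:
  fixes f :: "nat \<Rightarrow> 'a::comm_monoid_mult"
  assumes "\<And>i. even i \<Longrightarrow> f i = 1"
  shows "(\<Prod>i\<in>{1..2*K}. f i) = (\<Prod>k\<in>{1..K}. f (2*k - 1))"
proof (induction K)
  case (Suc K)
  have "{1..2 * Suc K} = insert (2*K + 2) (insert (2*K + 1) {1..2*K})"
    by auto
  with Suc assms[of "2*K + 2"] show ?case
    by (simp add: atLeastAtMostSuc_conv mult.commute)
qed simp

lemma prod_evens_eq: "(\<Prod>i\<in>{1..m}. int (2*i)) = 2^m * fact m"
  by (simp add: prod.distrib fact_prod)

lemma fact_double_eq_prod_odds:
  "(fact (2*m) :: int) = (\<Prod>k\<in>{1..m}. int (2*k-1)) * 2^m * fact m"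
proof (induction m)
  case (Suc m)
  have "(fact (2 * Suc m) :: int) = fact (2*m) * (int (2*m+1) * (2 * (int m + 1)))"
    by (simp add: algebra_simps)
  with Suc show ?case
    by (simp add: atLeastAtMostSuc_conv algebra_simps)
qed simp

lemma fact_odd_eq: "(fact (2*m + 1) :: int) = (2 * int m + 1) * fact (2*m)"
  by (simp only: Suc_eq_plus1[symmetric] fact_Suc) simp

lemma fact_odd_eq_prod_odds:
  "(fact (2*m + 1) :: int) = (\<Prod>k\<in>{1..m+1}. int (2*k - 1)) * 2^m * fact m"
  unfolding fact_odd_eq fact_double_eq_prod_odds by (simp add: atLeastAtMostSuc_conv algebra_simps)

lemma prod_fact_evens_eq:
  "(\<Prod>i\<in>{1..m}. fact (2*i) :: int) = 2^m * fact m * (\<Prod>i\<in>{1..m}. fact (2*i - 1))"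
proof -
  have "(\<Prod>i\<in>{1..m}. fact (2*i) :: int) = (\<Prod>i\<in>{1..m}. int (2*i) * fact (2*i - 1))"
    by (intro prod.cong refl) (auto simp: fact_reduce)
  then show ?thesis
    by (simp only: prod.distrib prod_evens_eq)
qed

lemma central_binomial_mult_fact_sq:
  "int ((2*m) choose m) * fact m * fact m = (fact (2*m) :: int)"
proof -
  have "fact m * fact m * ((2*m) choose m) = (fact (2*m) :: nat)"
    using binomial_fact_lemma[of m "2*m"] by simp
  then have "int (fact m * fact m * ((2*m) choose m)) = int (fact (2*m))"
    by (rule arg_cong)
  then show ?thesis
    by (simp add: ac_simps)
qed

lemma prod_odds_sq_eq:
  "(\<Prod>k\<in>{1..m+1}. int (2*k - 1))^2 * 4^m = (2 * int m + 1) * fact (2*m + 1) * int ((2*m) choose m)"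
proof -
  define D where "D = (\<Prod>k\<in>{1..m+1}. int (2*k - 1))"
  have "(D^2 * 4^m) * (fact m * fact m) = (D * 2^m * fact m) * (D * 2^m * fact m)"
    by (simp add: power2_eq_square algebra_simps flip: power_mult_distrib)
  also have "\<dots> = fact (2*m + 1) * fact (2*m + 1)"
    unfolding D_def fact_odd_eq_prod_odds ..
  also have "\<dots> = ((2 * int m + 1) * fact (2*m + 1) * int ((2*m) choose m)) * (fact m * fact m)"
    unfolding fact_odd_eq[of m] central_binomial_mult_fact_sq[symmetric] by (simp only: ac_simps)
  finally show ?thesis
    unfolding D_def by simp
qed

lemma cong_eq_of_mult_eq_one:
  fixes a b e :: int
  assumes "[a * b = 1] (mod n)" "[a = e] (mod n)" "e * e = 1"
  shows "[b = e] (mod n)"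
proof -
  have "[e * b = 1] (mod n)"
    using cong_trans[OF cong_scalar_right[OF cong_sym[OF assms(2)]] assms(1)] .
  then have "[e * (e * b) = e * 1] (mod n)"
    by (rule cong_scalar_left)
  then show ?thesis
    using assms(3) by (simp add: mult.assoc[symmetric])
qed

lemma prime_gt_3_not_dvd:
  assumes "prime p" "p > 3"
  shows "\<not> int p dvd 2" "\<not> int p dvd 3" "\<not> int p dvd 6"
proof -
  have pr: "prime (int p)" using assms by simp
  show "\<not> int p dvd 2" "\<not> int p dvd 3"
    using assms zdvd_imp_le[of "int p" 2] zdvd_imp_le[of "int p" 3] by auto
  then show "\<not> int p dvd 6" using prime_dvd_mult_iff[OF pr, of 2 3] by auto
qed

lemma fermat_theorem_int:
  assumes "prime p" "\<not> int p dvd a"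
  shows "[a ^ (p-1) = 1] (mod int p)"
proof -
  have "[nat (a mod int p) ^ (p-1) = 1] (mod p)"
    using assms by (intro fermat_theorem) (auto simp flip: int_dvd_int_iff simp: dvd_mod_iff prime_gt_0_nat)
  then have "[(a mod int p) ^ (p-1) = 1] (mod int p)"
    using assms by (simp add: cong_int_iff[symmetric] prime_gt_0_nat)
  then show ?thesis by (simp add: cong_def power_mod)
qed

lemma coprime_fact_prime:
  assumes "prime p" "k < p"
  shows "coprime (fact k :: int) (int p)"
proof -
  have "\<not> p dvd fact k"
    using assms by (simp add: prime_dvd_fact_iff)
  then have "\<not> int p dvd fact k"
    by (metis of_nat_fact int_dvd_int_iff)
  moreover have "prime (int p)"
    using assms(1) by simp
  ultimately show ?thesis
    by (metis prime_imp_coprime coprime_commute)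
qed

lemma coprime_prod_fact:
  assumes "prime p" "\<And>i. i \<in> A \<Longrightarrow> g i < p"
  shows "coprime (\<Prod>i\<in>A. fact (g i) :: int) (int p)"
  using assms by (intro prod_coprime_left coprime_fact_prime)

lemma fact_half_squared_cong:
  assumes "prime p" "odd p"
  shows "[fact ((p-1) div 2) ^ 2 = (-1::int) ^ ((p-1) div 2 + 1)] (mod int p)"
proof -
  define h where "h = (p-1) div 2"
  have p: "p = 2*h + 1" using assms(2) by (simp add: h_def)
  have "[(\<Prod>j\<in>{1..h}. int (h + j)) = (\<Prod>j\<in>{1..h}. - int j)] (mod int p)"
  proof -
    have "(\<Prod>j\<in>{1..h}. int (h + j)) = (\<Prod>j\<in>{1..h}. int (h + (h + 1 - j)))"
      by (rule prod.atLeastAtMost_rev)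
    also have "[\<dots> = (\<Prod>j\<in>{1..h}. - int j)] (mod int p)"
      by (rule cong_prod) (auto simp: p cong_iff_dvd_diff of_nat_diff)
    finally show ?thesis .
  qed
  then have "[fact h * (\<Prod>j\<in>{1..h}. int (h + j)) = fact h * ((-1)^h * fact h)] (mod int p)"
    by (simp add: cong_scalar_left prod_uminus fact_prod)
  moreover have "(fact (p-1) :: int) = (\<Prod>j\<in>{1..h+h}. int j)"
    by (simp add: p mult_2 fact_prod)
  then have "(fact (p-1) :: int) = fact h * (\<Prod>j\<in>{1..h}. int (h + j))"
    unfolding prod_atLeastAtMost_add_split by (simp add: fact_prod)
  ultimately have "[fact (p-1) = (-1)^h * fact h ^ 2] (mod int p)"
    by (simp add: power2_eq_square algebra_simps)
  then have "[(-1)^h * fact h ^ 2 = (-1::int)] (mod int p)"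
    using wilson_theorem[OF assms(1)] cong_sym cong_trans by blast
  then have "[(-1)^h * ((-1)^h * fact h ^ 2) = (-1)^h * (-1::int)] (mod int p)"
    by (rule cong_scalar_left)
  then show ?thesis by (simp add: h_def flip: mult.assoc power_add mult_2)
qed

lemma prod_odds_half_squared_cong:
  assumes "prime p" "p > 2"
  shows "[(\<Prod>k\<in>{1..(p-1) div 2}. int (2*k - 1))^2 = (-1)^((p-1) div 2 + 1)] (mod int p)"
proof -
  define h where "h = (p-1) div 2"
  define Odds where "Odds = (\<Prod>k\<in>{1..h}. int (2*k - 1))"
  have odd: "odd p" using assms prime_odd_nat by auto
  then have p: "p - 1 = 2*h" by (simp add: h_def)
  have "\<not> int p dvd 2"
    using assms zdvd_imp_le[of "int p" 2] by auto
  then have two: "[(2::int)^(2*h) = 1] (mod int p)"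
    using fermat_theorem_int[OF assms(1)] p by simp
  have "[(Odds * 2^h * fact h)^2 = (-1)^2] (mod int p)"
    using cong_pow[OF wilson_theorem[OF assms(1)], of 2] p
    by (simp add: Odds_def fact_double_eq_prod_odds)
  then have one: "[Odds^2 * 2^(2*h) * fact h^2 = 1] (mod int p)"
    by (simp add: power_mult_distrib power_mult[symmetric] mult.commute)
  have "[Odds^2 * 2^(2*h) * fact h^2 = Odds^2 * 1 * (-1)^(h+1)] (mod int p)"
    using two fact_half_squared_cong[OF assms(1) odd] unfolding h_def[symmetric]
    by (intro cong_mult cong_refl)
  then have "[Odds^2 * (-1)^(h+1) = 1] (mod int p)"
    using cong_trans[OF cong_sym one] by simp
  then have "[(-1)^(h+1) * (Odds^2 * (-1)^(h+1)) = (-1)^(h+1) * 1] (mod int p)"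
    by (rule cong_scalar_left)
  moreover have "(-1)^(h+1) * (Odds^2 * (-1)^(h+1)) = Odds^2 * ((-1)^(h+1) * (-1::int)^(h+1))"
    by (simp only: ac_simps)
  moreover have "(-1)^(h+1) * (-1::int)^(h+1) = 1"
    by (simp flip: power_mult_distrib)
  ultimately have "[Odds^2 = (-1)^(h+1)] (mod int p)"
    by (simp only: mult_1_right)
  then show ?thesis
    unfolding Odds_def h_def .
qed

lemma pow_2_half_1mod4_cong:
  assumes "prime p" "p = 4*m + 1"
  shows "[2^(2*m) = (-1::int)^m] (mod int p)"
proof -
  have "(\<Prod>k\<in>{1..m}. int (2*(m + k))) = (\<Prod>k\<in>{1..m}. int (2*(m + (m + 1 - k))))"
    by (rule prod.atLeastAtMost_rev)
  also have "[\<dots> = (\<Prod>k\<in>{1..m}. - int (2*k - 1))] (mod int p)"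
    by (rule cong_prod) (auto simp: assms(2) cong_iff_dvd_diff)
  also have "(\<Prod>k\<in>{1..m}. - int (2*k - 1)) = (-1)^m * (\<Prod>k\<in>{1..m}. int (2*k - 1))"
    by (subst prod_uminus) simp
  finally have "[(\<Prod>k\<in>{1..m}. int (2*(m + k))) = (-1)^m * (\<Prod>k\<in>{1..m}. int (2*k - 1))] (mod int p)" .
  then have "[(\<Prod>k\<in>{1..m}. int (2*k)) * (\<Prod>k\<in>{1..m}. int (2*(m + k)))
      = (2^m * fact m) * ((-1)^m * (\<Prod>k\<in>{1..m}. int (2*k - 1)))] (mod int p)"
    unfolding prod_evens_eq by (rule cong_scalar_left)
  moreover have "(\<Prod>k\<in>{1..m}. int (2*k)) * (\<Prod>k\<in>{1..m}. int (2*(m + k))) = fact (2*m) * 2^(2*m)"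
    using prod_atLeastAtMost_add_split[of "\<lambda>k. int (2*k)" m m, unfolded mult_2[of m, symmetric]]
    unfolding prod_evens_eq[of "2*m"] by (simp only: ac_simps)
  moreover have "(2^m * fact m) * ((-1)^m * (\<Prod>k\<in>{1..m}. int (2*k - 1))) = fact (2*m) * (-1::int)^m"
    unfolding fact_double_eq_prod_odds by (simp only: ac_simps)
  moreover have "coprime (fact (2*m) :: int) (int p)"
    using coprime_fact_prime[OF assms(1)] assms(2) by simp
  ultimately show ?thesis
    using cong_mult_lcancel by metis
qed

lemma Legendre_3_1mod4:
  assumes "prime p" "p > 3" "p mod 4 = 1"
  shows "Legendre 3 (int p) = (if p mod 3 = 1 then 1 else -1)"
proof -
  have "Legendre (int p) 3 * Legendre 3 (int p) = (-1) ^ ((p - 1) div 2 * ((3 - 1) div 2))"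
    using Quadratic_Reciprocity[of p 3] assms by auto
  moreover have "even ((p - 1) div 2)"
    using assms(3) by presburger
  ultimately have reciprocity: "Legendre (int p) 3 * Legendre 3 (int p) = 1"
    by simp
  have "[Legendre (int p) 3 = int p] (mod 3)"
    using euler_criterion[of 3 "int p"] by simp
  then have "Legendre (int p) 3 mod 3 = int (p mod 3)"
    by (simp add: cong_def zmod_int)
  moreover have "\<not> 3 dvd p"
    using assms(1,2) prime_nat_iff[of p] by auto
  then have "p mod 3 = 1 \<or> p mod 3 = 2"
    by presburger
  moreover have "Legendre (int p) 3 \<in> {-1, 0, 1}"
    by (auto simp: Legendre_def)
  ultimately have "Legendre (int p) 3 = (if p mod 3 = 1 then 1 else -1)"
    by auto
  with reciprocity show ?thesis
    by (auto split: if_splits)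
qed

section \<open>Products of a linear form over the residues\<close>

lemma bij_betw_linear_residues:
  assumes "prime p" "\<not> int p dvd c"
  shows "bij_betw (\<lambda>j. (a + c * int j) mod int p) {0..<p} {0..<int p}"
proof -
  let ?f = "\<lambda>j. (a + c * int j) mod int p"
  have "inj_on ?f {0..<p}"
  proof (rule inj_onI)
    fix x y assume x: "x \<in> {0..<p}" and y: "y \<in> {0..<p}" and "?f x = ?f y"
    then have "int p dvd c * (int x - int y)"
      by (simp add: mod_eq_dvd_iff algebra_simps)
    then have "int p dvd int x - int y"
      using assms by (simp add: prime_dvd_mult_iff)
    moreover have "\<bar>int x - int y\<bar> < int p" using x y by auto
    ultimately show "x = y"
      using dvd_imp_le_int[of "int x - int y" "int p"] by fastforce
  qed
  moreover have "?f ` {0..<p} \<subseteq> {0..<int p}"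
    using assms prime_gt_0_nat by auto
  ultimately show ?thesis
    by (simp add: bij_betw_def card_image card_subset_eq)
qed

lemma prod_nonzero_linear_residues_cong:
  assumes "prime p" "\<not> int p dvd c"
  shows "[(\<Prod>j\<in>{j\<in>{0..<p}. \<not> int p dvd a + c * int j}. a + c * int j) = -1] (mod int p)"
proof -
  let ?f = "\<lambda>j. (a + c * int j) mod int p"
  let ?J = "{j\<in>{0..<p}. \<not> int p dvd a + c * int j}"
  have bij: "bij_betw ?f {0..<p} {0..<int p}"
    using bij_betw_linear_residues[OF assms] .
  then have inj: "inj_on ?f ?J"
    by (auto simp: bij_betw_def intro: inj_on_subset)
  have "?f ` ?J = {k \<in> ?f ` {0..<p}. k \<noteq> 0}"
    by (auto simp: dvd_eq_mod_eq_0)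
  also have "\<dots> = int ` {1..<p}"
    using bij by (auto simp: bij_betw_def image_int_atLeastLessThan)
  finally have "(\<Prod>j\<in>?J. ?f j) = (\<Prod>k\<in>{1..<p}. int k)"
    using prod.reindex[OF inj, of id] prod.reindex[of int "{1..<p}" id] by simp
  also have "\<dots> = fact (p - 1)"
  proof -
    have "{1..<p} = {1..p-1}" using prime_gt_0_nat[OF assms(1)] by auto
    then show ?thesis by (simp add: fact_prod)
  qed
  finally have "[(\<Prod>j\<in>?J. a + c * int j) = fact (p - 1)] (mod int p)"
    by (metis (no_types, lifting) cong_mod_left cong_prod cong_refl)
  then show ?thesis
    using wilson_theorem[OF assms(1)] by (rule cong_trans)
qed

lemma linear_residue_root_unique:
  assumes "prime p" "\<not> int p dvd c"
  obtains j0 where "j0 < p" "{j\<in>{0..<p}. int p dvd a + c * int j} = {j0}"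
proof -
  let ?f = "\<lambda>j. (a + c * int j) mod int p"
  have bij: "bij_betw ?f {0..<p} {0..<int p}"
    using bij_betw_linear_residues[OF assms] .
  moreover have "0 \<in> {0..<int p}"
    using prime_gt_0_nat[OF assms(1)] by simp
  ultimately have "0 \<in> ?f ` {0..<p}"
    by (simp add: bij_betw_def)
  then obtain j0 where j0: "j0 \<in> {0..<p}" "?f j0 = 0"
    by (auto simp del: atLeastLessThan_iff)
  have "j = j0" if "j \<in> {0..<p}" "int p dvd a + c * int j" for j
    using inj_onD[OF bij_betw_imp_inj_on[OF bij], of j j0] that j0 by (simp add: dvd_eq_mod_eq_0)
  moreover have "int p dvd a + c * int j0"
    using j0 by (simp add: dvd_eq_mod_eq_0)
  ultimately have "{j\<in>{0..<p}. int p dvd a + c * int j} = {j0}"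
    using j0(1) by blast
  with j0(1) show ?thesis by (intro that) simp_all
qed

lemma prod_linear_avoiding_root_cong:
  assumes "prime p" "\<not> int p dvd c" "\<not> int p dvd d"
    and "j1 < p" "int p dvd b + d * int j1" "\<not> int p dvd a + c * int j1"
  shows "[(a + c * int j1) *
          (\<Prod>j\<in>{j\<in>{0..<p}. \<not> int p dvd a + c * int j \<and> \<not> int p dvd b + d * int j}. a + c * int j)
          = -1] (mod int p)"
proof -
  define U where "U j \<longleftrightarrow> int p dvd a + c * int j" for j
  define V where "V j \<longleftrightarrow> int p dvd b + d * int j" for j
  obtain j0 where roots: "{j\<in>{0..<p}. V j} = {j0}"
    using linear_residue_root_unique[OF assms(1,3)] unfolding V_def .
  have "j1 \<in> {j\<in>{0..<p}. V j}"
    using assms(4,5) unfolding V_def by simp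
  then have "{j\<in>{0..<p}. V j} = {j1}"
    unfolding roots by simp
  then have "V j \<longleftrightarrow> j = j1" if "j < p" for j
    using that by (metis (no_types, lifting) atLeastLessThan_iff mem_Collect_eq singleton_iff zero_le)
  then have "{j\<in>{0..<p}. \<not> U j} = insert j1 {j\<in>{0..<p}. \<not> U j \<and> \<not> V j}"
    using assms(4,6) unfolding U_def[symmetric] by auto
  moreover have "j1 \<notin> {j\<in>{0..<p}. \<not> U j \<and> \<not> V j}"
    using assms(5) unfolding V_def by simp
  ultimately show ?thesis
    using prod_nonzero_linear_residues_cong[OF assms(1,2), of a] unfolding U_def V_def by simp
qed

section \<open>The product T(a,b,c) T(a,-b,c)\<close>

lemma T_eq_prod_rows:
  "T p a b c = (\<Prod>i\<in>{1..(p-1) div 2}.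
     \<Prod>j\<in>{j\<in>{1..(p-1) div 2}. \<not> int p dvd qf a b c (int i) (int j)}. qf a b c (int i) (int j))"
proof -
  let ?h = "(p-1) div 2"
  have "{(i,j). i \<in> {1..?h} \<and> j \<in> {1..?h} \<and> \<not> int p dvd qf a b c (int i) (int j)}
        = Sigma {1..?h} (\<lambda>i. {j\<in>{1..?h}. \<not> int p dvd qf a b c (int i) (int j)})"
    by auto
  then show ?thesis
    unfolding T_def by (simp add: prod.Sigma)
qed

lemma qf_reflect_cong: "[qf a (-b) c i j = qf a b c i (n - j)] (mod n)"
proof -
  have "qf a b c i (n - j) = qf a (-b) c i j + n * (b * i + c * (n - 2 * j))"
    by (simp add: qf_def algebra_simps power2_eq_square)
  then show ?thesis by (simp add: cong_def)
qed

lemma row_reflect_cong: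
  assumes "p = 2*h + 1"
  shows "[(\<Prod>j\<in>{j\<in>{1..h}. \<not> int p dvd qf a (-b) c x (int j)}. qf a (-b) c x (int j))
        = (\<Prod>j\<in>{j\<in>{h<..<p}. \<not> int p dvd qf a b c x (int j)}. qf a b c x (int j))] (mod int p)"
proof -
  define f where "f j = qf a b c x (int j)" for j
  have refl: "[qf a (-b) c x (int j) = f (p - j)] (mod int p)" if "j \<le> p" for j
    using qf_reflect_cong[of a b c x "int j" "int p"] that by (simp add: f_def of_nat_diff)
  then have "int p dvd qf a (-b) c x (int j) \<longleftrightarrow> int p dvd f (p - j)" if "j \<le> p" for j
    using that cong_dvd_iff by blast
  then have "{j\<in>{1..h}. \<not> int p dvd qf a (-b) c x (int j)} = {j\<in>{1..h}. \<not> int p dvd f (p - j)}"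
    using assms by auto
  then have "[(\<Prod>j\<in>{j\<in>{1..h}. \<not> int p dvd qf a (-b) c x (int j)}. qf a (-b) c x (int j))
           = (\<Prod>j\<in>{j\<in>{1..h}. \<not> int p dvd f (p - j)}. f (p - j))] (mod int p)"
    using refl assms by (auto intro: cong_prod)
  also have "(\<Prod>j\<in>{j\<in>{1..h}. \<not> int p dvd f (p - j)}. f (p - j))
           = (\<Prod>j\<in>{j\<in>{h<..<p}. \<not> int p dvd f j}. f j)"
    by (rule prod.reindex_bij_witness[where i="\<lambda>j. p - j" and j="\<lambda>j. p - j"]) (auto simp: assms)
  finally show ?thesis unfolding f_def .
qed

lemma T_mult_T_reflect_cong:
  assumes "odd p"
  shows "[T p a b c * T p a (-b) c = (\<Prod>i\<in>{1..(p-1) div 2}.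
            \<Prod>j\<in>{j\<in>{1..<p}. \<not> int p dvd qf a b c (int i) (int j)}. qf a b c (int i) (int j))] (mod int p)"
proof -
  define h where "h = (p-1) div 2"
  have p: "p = 2*h + 1" using assms by (simp add: h_def)
  have split: "{j\<in>{1..<p}. P j} = {j\<in>{1..h}. P j} \<union> {j\<in>{h<..<p}. P j}" for P
    using p by auto
  have "[T p a b c * T p a (-b) c = (\<Prod>i\<in>{1..h}.
          (\<Prod>j\<in>{j\<in>{1..h}. \<not> int p dvd qf a b c (int i) (int j)}. qf a b c (int i) (int j)) *
          (\<Prod>j\<in>{j\<in>{h<..<p}. \<not> int p dvd qf a b c (int i) (int j)}. qf a b c (int i) (int j)))] (mod int p)"
    unfolding T_eq_prod_rows h_def[symmetric] prod.distrib
    by (intro cong_mult cong_refl cong_prod row_reflect_cong[OF p])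
  also have "(\<Prod>i\<in>{1..h}.
          (\<Prod>j\<in>{j\<in>{1..h}. \<not> int p dvd qf a b c (int i) (int j)}. qf a b c (int i) (int j)) *
          (\<Prod>j\<in>{j\<in>{h<..<p}. \<not> int p dvd qf a b c (int i) (int j)}. qf a b c (int i) (int j)))
        = (\<Prod>i\<in>{1..h}. \<Prod>j\<in>{j\<in>{1..<p}. \<not> int p dvd qf a b c (int i) (int j)}. qf a b c (int i) (int j))"
    unfolding split by (intro prod.cong refl prod.union_disjoint[symmetric]) auto
  finally show ?thesis unfolding h_def .
qed

lemma qf_2_5_2: "qf 2 5 2 i j = (2*i + j) * (i + 2*j)"
  by (simp add: qf_def algebra_simps power2_eq_square)

lemma row_2_5_2_prod_cong:
  assumes "prime p" "p > 3" "\<not> int p dvd x"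
  obtains ju jv where "int p dvd 2*x + int ju" "int p dvd x + 2 * int jv"
    "[(2*x + int jv) * (x + 2 * int ju) *
      (2 * x^2 * (\<Prod>j\<in>{j\<in>{1..<p}. \<not> int p dvd qf 2 5 2 x (int j)}. qf 2 5 2 x (int j))) = 1]
       (mod int p)"
proof -
  have pr: "prime (int p)" using assms(1) by simp
  have p1: "\<not> int p dvd 1" and p2: "\<not> int p dvd 2" and p3: "\<not> int p dvd 3"
    using assms(2) prime_gt_3_not_dvd[OF assms(1,2)] by auto
  define u where "u j = 2*x + 1 * int j" for j
  define v where "v j = x + 2 * int j" for j
  define J0 where "J0 = {j\<in>{0..<p}. \<not> int p dvd u j \<and> \<not> int p dvd v j}"
  obtain jv where jv: "jv < p" "{j\<in>{0..<p}. int p dvd v j} = {jv}"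
    using linear_residue_root_unique[OF assms(1) p2, of x] unfolding v_def .
  obtain ju where ju: "ju < p" "{j\<in>{0..<p}. int p dvd u j} = {ju}"
    using linear_residue_root_unique[OF assms(1) p1, of "2*x"] unfolding u_def .
  have "jv \<in> {j\<in>{0..<p}. int p dvd v j}" and "ju \<in> {j\<in>{0..<p}. int p dvd u j}"
    unfolding jv(2) ju(2) by simp_all
  then have v_jv: "int p dvd v jv" and u_ju: "int p dvd u ju"
    by simp_all
  have not_both: "\<not> int p dvd u j" if "int p dvd v j" for j
  proof
    assume "int p dvd u j"
    moreover have "3 * x = 2 * u j - v j" by (simp add: u_def v_def)
    ultimately have "int p dvd 3 * x" using that by (metis dvd_diff dvd_mult)
    then show False using assms(3) p3 pr by (simp add: prime_dvd_mult_iff)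
  qed
  have "[u jv * prod u J0 = -1] (mod int p)"
    using prod_linear_avoiding_root_cong[OF assms(1) p1 p2 jv(1)] v_jv not_both[OF v_jv]
    unfolding u_def v_def J0_def by simp
  moreover have "[v ju * prod v J0 = -1] (mod int p)"
    using prod_linear_avoiding_root_cong[OF assms(1) p2 p1 ju(1), where a=x and b="2*x"] u_ju not_both[of ju]
    unfolding u_def v_def J0_def by (simp add: conj_commute) blast
  ultimately have "[(u jv * v ju) * (\<Prod>j\<in>J0. u j * v j) = 1] (mod int p)"
    using cong_mult by (fastforce simp: prod.distrib algebra_simps)
  moreover have "J0 = insert 0 {j\<in>{1..<p}. \<not> int p dvd qf 2 5 2 x (int j)}"
    using assms(3) p2 pr prime_gt_0_nat[OF assms(1)]
    by (auto simp: J0_def u_def v_def qf_2_5_2 prime_dvd_mult_iff)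
  ultimately show ?thesis
    using that u_ju v_jv by (simp add: u_def v_def qf_2_5_2 power2_eq_square algebra_simps)
qed

lemma row_2_5_2_cong:
  assumes "prime p" "p > 3" "\<not> int p dvd x"
  shows "[9 * x^4 * (\<Prod>j\<in>{j\<in>{1..<p}. \<not> int p dvd qf 2 5 2 x (int j)}. qf 2 5 2 x (int j)) = -1]
           (mod int p)"
proof -
  define R where "R = (\<Prod>j\<in>{j\<in>{1..<p}. \<not> int p dvd qf 2 5 2 x (int j)}. qf 2 5 2 x (int j))"
  obtain ju jv where u_ju: "int p dvd 2*x + int ju" and v_jv: "int p dvd x + 2 * int jv"
    and prod: "[(2*x + int jv) * (x + 2 * int ju) * (2 * x^2 * R) = 1] (mod int p)"
    using row_2_5_2_prod_cong[OF assms] unfolding R_def .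
  from prod have "[2 * 1 = 2 * ((2*x + int jv) * (x + 2 * int ju) * (2 * x^2 * R))] (mod int p)"
    by (rule cong_sym[OF cong_scalar_left])
  also have "2 * ((2*x + int jv) * (x + 2 * int ju) * (2 * x^2 * R))
      = (2 * (2*x + int jv)) * (x + 2 * int ju) * (2 * x^2 * R)"
    by (simp only: ac_simps)
  also have "[\<dots> = (3 * x) * (-3 * x) * (2 * x^2 * R)] (mod int p)"
  proof (intro cong_mult[OF cong_mult cong_refl])
    show "[2 * (2*x + int jv) = 3 * x] (mod int p)"
      using v_jv by (simp add: cong_iff_dvd_diff algebra_simps)
    show "[x + 2 * int ju = -3 * x] (mod int p)"
      using dvd_mult[OF u_ju, of 2] by (simp add: cong_iff_dvd_diff algebra_simps)
  qed
  also have "(3 * x) * (-3 * x) * (2 * x^2 * R) = 2 * (-9 * x^4 * R)"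
    by (simp add: power2_eq_square power4_eq_xxxx)
  finally have "[2 * (-9 * x^4 * R) = 2 * 1] (mod int p)"
    by (rule cong_sym)
  moreover have "coprime 2 (int p)"
    using prime_imp_coprime[of "int p" 2] assms(1) prime_gt_3_not_dvd[OF assms(1,2)]
    by (simp add: coprime_commute)
  ultimately have "[-9 * x^4 * R = 1] (mod int p)"
    by (simp only: cong_mult_lcancel)
  then have "[- (9 * x^4 * R) = - (-1)] (mod int p)"
    by simp
  then show ?thesis
    unfolding R_def cong_minus_minus_iff .
qed

lemma pow_9_mult_fact_half_pow_4_cong:
  assumes "prime p" "p > 3"
  shows "[9 ^ ((p-1) div 2) * fact ((p-1) div 2) ^ 4 = (1::int)] (mod int p)"
proof -
  define h where "h = (p-1) div 2"
  have odd: "odd p" using assms prime_odd_nat by auto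
  have "p - 1 = 2 * h" using odd by (simp add: h_def)
  then have "(9::int) ^ h = 3 ^ (p-1)"
    by (simp add: power_mult)
  then have "[9 ^ h = (1::int)] (mod int p)"
    using fermat_theorem_int[OF assms(1)] prime_gt_3_not_dvd[OF assms] by simp
  moreover have "[(fact h ^ 2) ^ 2 = ((-1::int) ^ (h + 1)) ^ 2] (mod int p)"
    using fact_half_squared_cong[OF assms(1) odd] unfolding h_def by (rule cong_pow)
  then have "[fact h ^ 4 = (1::int)] (mod int p)"
    by (simp flip: power_mult power_mult_distrib)
  ultimately show ?thesis
    unfolding h_def using cong_mult by force
qed

lemma T_2_5_2_mult_T_2_neg5_2_cong:
  assumes "prime p" "p > 3"
  shows "[T p 2 5 2 * T p 2 (-5) 2 = (-1) ^ ((p-1) div 2)] (mod int p)"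
proof -
  define h where "h = (p-1) div 2"
  define R where "R i = (\<Prod>j\<in>{j\<in>{1..<p}. \<not> int p dvd qf 2 5 2 (int i) (int j)}. qf 2 5 2 (int i) (int j))"
    for i
  have odd: "odd p" using assms prime_odd_nat by auto
  have "[(\<Prod>i\<in>{1..h}. 9 * int i ^ 4 * R i) = (\<Prod>i\<in>{1..h}. -1)] (mod int p)"
  proof (rule cong_prod)
    fix i assume "i \<in> {1..h}"
    then have "\<not> int p dvd int i"
      using odd by (auto simp: h_def dest: dvd_imp_le)
    then show "[9 * int i ^ 4 * R i = -1] (mod int p)"
      unfolding R_def by (rule row_2_5_2_cong[OF assms])
  qed
  moreover have "(\<Prod>i\<in>{1..h}. 9 * int i ^ 4 * R i) = (9 ^ h * fact h ^ 4) * (\<Prod>i\<in>{1..h}. R i)"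
    by (simp add: prod.distrib fact_prod flip: prod_power_distrib)
  ultimately have "[(9 ^ h * fact h ^ 4) * (\<Prod>i\<in>{1..h}. R i) = (-1) ^ h] (mod int p)"
    by simp
  moreover have "[(9 ^ h * fact h ^ 4) * (\<Prod>i\<in>{1..h}. R i) = 1 * (\<Prod>i\<in>{1..h}. R i)] (mod int p)"
    using pow_9_mult_fact_half_pow_4_cong[OF assms] unfolding h_def by (rule cong_mult[OF _ cong_refl])
  ultimately have "[(\<Prod>i\<in>{1..h}. R i) = (-1) ^ h] (mod int p)"
    by (metis cong_sym cong_trans mult_1)
  moreover have "[T p 2 5 2 * T p 2 (-5) 2 = (\<Prod>i\<in>{1..h}. R i)] (mod int p)"
    using T_mult_T_reflect_cong[OF odd, of 2 5 2] unfolding R_def h_def .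
  ultimately show ?thesis
    unfolding h_def using cong_trans by blast
qed

section \<open>T(2,5,2) as a square, computed row by row\<close>

definition half_row :: "nat \<Rightarrow> nat \<Rightarrow> int" where
  "half_row p i = (\<Prod>j\<in>{j\<in>{1..(p-1) div 2}. 2*i + j \<noteq> p \<and> i + 2*j \<noteq> p}. int (2*i + j))"

lemma dvd_iff_eq_below_double:
  assumes "0 < x" "x < 2*p"
  shows "int p dvd int x \<longleftrightarrow> x = p"
proof
  assume "int p dvd int x"
  then obtain k where k: "x = p * k" by (auto simp: int_dvd_int_iff elim!: dvdE)
  with assms have "k = 1" by (cases "k \<ge> 2") (auto dest: mult_le_mono2[of 2 k p])
  with k show "x = p" by simp
qed simp

lemma T_2_5_2_eq_square:
  assumes "prime p" "p > 3"
  shows "T p 2 5 2 = (\<Prod>i\<in>{1..(p-1) div 2}. half_row p i) ^ 2"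
proof -
  define h where "h = (p-1) div 2"
  have p: "p = 2*h + 1" using assms prime_odd_nat by (auto simp: h_def)
  define S where "S = {(i,j). i \<in> {1..h} \<and> j \<in> {1..h} \<and> 2*i + j \<noteq> p \<and> i + 2*j \<noteq> p}"
  have "int p dvd qf 2 5 2 (int i) (int j) \<longleftrightarrow> 2*i + j = p \<or> i + 2*j = p"
    if "i \<in> {1..h}" "j \<in> {1..h}" for i j
  proof -
    have "int p dvd qf 2 5 2 (int i) (int j) \<longleftrightarrow> int p dvd int (2*i + j) \<or> int p dvd int (i + 2*j)"
      using assms(1) by (simp add: qf_2_5_2 prime_dvd_mult_iff)
    also have "\<dots> \<longleftrightarrow> 2*i + j = p \<or> i + 2*j = p"
      using dvd_iff_eq_below_double[of "2*i + j" p] dvd_iff_eq_below_double[of "i + 2*j" p] that p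
      by auto
    finally show ?thesis .
  qed
  then have "T p 2 5 2 = (\<Prod>(i,j)\<in>S. int (2*i + j) * int (i + 2*j))"
    unfolding T_def h_def[symmetric] by (intro prod.cong) (auto simp: S_def qf_2_5_2)
  also have "\<dots> = (\<Prod>(i,j)\<in>S. int (2*i + j)) * (\<Prod>(i,j)\<in>S. int (i + 2*j))"
    by (simp add: prod.distrib split_def)
  also have "(\<Prod>(i,j)\<in>S. int (i + 2*j)) = (\<Prod>(i,j)\<in>S. int (2*i + j))"
    by (rule prod.reindex_bij_witness[where i="\<lambda>(i,j). (j,i)" and j="\<lambda>(i,j). (j,i)"]) (auto simp: S_def)
  also have "S = Sigma {1..h} (\<lambda>i. {j\<in>{1..h}. 2*i + j \<noteq> p \<and> i + 2*j \<noteq> p})"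
    by (auto simp: S_def)
  finally show ?thesis
    by (simp add: half_row_def h_def power2_eq_square flip: prod.Sigma)
qed

definition fact_except :: "nat \<Rightarrow> nat \<Rightarrow> int" where
  "fact_except p m = (\<Prod>k\<in>{1..m} - {p}. int k)"

lemma fact_except_eq_fact: "m < p \<Longrightarrow> fact_except p m = fact m"
  by (simp add: fact_except_def fact_prod)

lemma fact_except_add:
  "fact_except p (a + b) = fact_except p a * (\<Prod>j\<in>{j\<in>{1..b}. a + j \<noteq> p}. int (a + j))"
proof -
  have split: "{1..a+b} - {p} = ({1..a} - {p}) \<union> (\<lambda>j. a + j) ` {j\<in>{1..b}. a + j \<noteq> p}"
    by (auto simp: image_iff) presburger
  show ?thesis
    unfolding fact_except_def split by (subst prod.union_disjoint) (auto simp: prod.reindex inj_on_def)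
qed

lemma fact_except_cong:
  assumes "prime p" "p \<le> m"
  shows "[fact_except p m = - fact (m - p)] (mod int p)"
proof -
  have "{j\<in>{1..m-p}. p + j \<noteq> p} = {1..m-p}"
    by auto
  then have "fact_except p m = fact_except p p * (\<Prod>j\<in>{1..m-p}. int (p + j))"
    using fact_except_add[of p p "m - p"] assms(2) by simp
  moreover have "{1..p} - {p} = {1..p-1}"
    by auto
  then have "fact_except p p = fact (p - 1)"
    by (simp add: fact_except_def fact_prod)
  moreover have "[(\<Prod>j\<in>{1..m-p}. int (p + j)) = (\<Prod>j\<in>{1..m-p}. int j)] (mod int p)"
    by (rule cong_prod) (simp add: cong_def)
  ultimately have "[fact_except p m = (-1) * fact (m - p)] (mod int p)"
    using cong_mult[OF wilson_theorem[OF assms(1)]] by (simp add: fact_prod)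
  then show ?thesis
    by simp
qed

definition full_row :: "nat \<Rightarrow> nat \<Rightarrow> int" where
  "full_row p i = (\<Prod>j\<in>{j\<in>{1..(p-1) div 2}. 2*i + j \<noteq> p}. int (2*i + j))"

(* For odd i, the one factor 2i + j of full_row missing from half_row is the one with i + 2j = p;
   for even i no factor is missing. *)
definition row_surplus :: "nat \<Rightarrow> nat \<Rightarrow> int" where
  "row_surplus p i = (if odd i then int (2*i + (p - i) div 2) else 1)"

lemma fact_except_eq_fact_mult_full_row:
  assumes "2*i < p"
  shows "fact_except p (2*i + (p-1) div 2) = fact (2*i) * full_row p i"
  unfolding full_row_def fact_except_add fact_except_eq_fact[OF assms] ..

lemma full_row_eq_half_row_mult_surplus:
  assumes "prime p" "p > 3" "i \<in> {1..(p-1) div 2}"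
  shows "full_row p i = half_row p i * row_surplus p i"
proof -
  define h where "h = (p-1) div 2"
  have p: "p = 2*h + 1" using assms prime_odd_nat by (auto simp: h_def)
  show ?thesis
  proof (cases "odd i")
    case True
    define j0 where "j0 = (p - i) div 2"
    have i: "1 \<le> i" "i \<le> h"
      using assms(3) by (simp_all add: h_def)
    have "even (p - i)"
      using True p by simp
    then have "2*j0 = p - i"
      by (simp add: j0_def)
    then have j0: "i + 2*j0 = p" "j0 \<in> {1..h}"
      using i p by auto
    have "2*i + j0 \<noteq> p"
    proof
      assume "2*i + j0 = p"
      then have "p = 3*i" using j0 by linarith
      then show False using assms(1,2) prime_product[of 3 i] by auto
    qed
    then have "{j\<in>{1..h}. 2*i + j \<noteq> p} = insert j0 {j\<in>{1..h}. 2*i + j \<noteq> p \<and> i + 2*j \<noteq> p}"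
      using j0 by auto
    then have "full_row p i = int (2*i + j0) * half_row p i"
      unfolding full_row_def half_row_def h_def[symmetric] using j0(1) by simp
    then show ?thesis
      using True by (simp add: row_surplus_def j0_def)
  next
    case False
    then have "{j\<in>{1..h}. 2*i + j \<noteq> p} = {j\<in>{1..h}. 2*i + j \<noteq> p \<and> i + 2*j \<noteq> p}"
      using p by (auto; presburger)
    then show ?thesis
      unfolding full_row_def half_row_def h_def[symmetric] using False by (simp add: row_surplus_def)
  qed
qed

lemma prod_full_rows_eq:
  assumes "prime p" "p > 3"
  shows "(\<Prod>i\<in>{1..(p-1) div 2}. full_row p i)
         = (\<Prod>i\<in>{1..(p-1) div 2}. half_row p i) * (\<Prod>i\<in>{1..(p-1) div 2}. row_surplus p i)"
  unfolding prod.distrib[symmetric] using full_row_eq_half_row_mult_surplus[OF assms]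
  by (intro prod.cong) auto

lemma prod_full_rows_cong:
  assumes "prime p" "p > 3"
  defines "h \<equiv> (p-1) div 2"
  shows "[(\<Prod>i\<in>{1..h}. full_row p i) * (\<Prod>i\<in>{1..h}. fact (2*i))
          = (\<Prod>i\<in>{1..h}. if h + 2*i < p then fact (h + 2*i) else - fact (h + 2*i - p))] (mod int p)"
proof -
  have p: "p = 2*h + 1" using assms prime_odd_nat by (auto simp: h_def)
  have "(\<Prod>i\<in>{1..h}. full_row p i) * (\<Prod>i\<in>{1..h}. fact (2*i)) = (\<Prod>i\<in>{1..h}. fact_except p (h + 2*i))"
    unfolding prod.distrib[symmetric]
  proof (rule prod.cong[OF refl])
    fix i assume "i \<in> {1..h}"
    then have "2*i < p" using p by auto
    then show "full_row p i * fact (2*i) = fact_except p (h + 2*i)"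
      using fact_except_eq_fact_mult_full_row[of i p] by (simp add: h_def add.commute)
  qed
  also have "[\<dots> = (\<Prod>i\<in>{1..h}. if h + 2*i < p then fact (h + 2*i) else - fact (h + 2*i - p))] (mod int p)"
  proof (rule cong_prod)
    fix i
    show "[fact_except p (h + 2*i) = (if h + 2*i < p then fact (h + 2*i) else - fact (h + 2*i - p))] (mod int p)"
      using fact_except_eq_fact[of "h + 2*i" p] fact_except_cong[OF assms(1), of "h + 2*i"] by simp
  qed
  finally show ?thesis .
qed

lemma double_row_surplus_cong:
  assumes "odd p" "odd i" "i \<le> p"
  shows "[2 * row_surplus p i = 3 * int i] (mod int p)"
proof -
  have eq: "2 * (2*i + (p - i) div 2) = 3*i + p"
    using assms by (auto elim!: oddE)
  then have "2 * row_surplus p i = 3 * int i + int p"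
    using assms(2) arg_cong[OF eq, of int] unfolding row_surplus_def by simp
  then show ?thesis
    by (simp add: cong_def)
qed

lemma prod_row_surplus_cong:
  assumes "odd p" "2*K \<le> p"
  shows "[2^K * (\<Prod>k\<in>{1..K}. row_surplus p (2*k - 1)) = 3^K * (\<Prod>k\<in>{1..K}. int (2*k - 1))] (mod int p)"
proof -
  have "[(\<Prod>k\<in>{1..K}. 2 * row_surplus p (2*k - 1)) = (\<Prod>k\<in>{1..K}. 3 * int (2*k - 1))] (mod int p)"
    using assms by (intro cong_prod double_row_surplus_cong) auto
  then show ?thesis
    unfolding prod.distrib prod_constant by simp
qed

section \<open>The case p = 1 (mod 4)\<close>

lemma prod_full_rows_1mod4_cong:
  assumes "prime p" "p = 4*m + 1"
  shows "[(\<Prod>i\<in>{1..2*m}. full_row p i) * (2^m * fact m) = (-1)^m] (mod int p)"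
proof -
  define X where "X = (\<Prod>i\<in>{1..m}. fact (2*m + 2*i) :: int)"
  define Y where "Y = (\<Prod>i\<in>{1..m}. fact (2*i - 1) :: int)"
  have "p > 3" using assms prime_gt_1_nat[OF assms(1)] by auto
  moreover have "(p-1) div 2 = 2*m" using assms(2) by simp
  ultimately have "[(\<Prod>i\<in>{1..2*m}. full_row p i) * (\<Prod>i\<in>{1..2*m}. fact (2*i))
      = (\<Prod>i\<in>{1..2*m}. if 2*m + 2*i < p then fact (2*m + 2*i) else - fact (2*m + 2*i - p))] (mod int p)"
    using prod_full_rows_cong[OF assms(1)] by metis
  also have "(\<Prod>i\<in>{1..2*m}. if 2*m + 2*i < p then fact (2*m + 2*i) else - fact (2*m + 2*i - p))
      = X * (\<Prod>i\<in>{1..m}. - fact (2*i - 1))"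
    unfolding mult_2 prod_atLeastAtMost_add_split X_def using assms(2)
    by (intro arg_cong2[where f=times] prod.cong) auto
  also have "\<dots> = (X * Y) * (-1)^m"
    by (simp add: Y_def prod_uminus)
  finally have "[(\<Prod>i\<in>{1..2*m}. full_row p i) * (\<Prod>i\<in>{1..2*m}. fact (2*i)) = (X * Y) * (-1)^m] (mod int p)" .
  moreover have "(\<Prod>i\<in>{1..2*m}. fact (2*i) :: int) = (\<Prod>i\<in>{1..m}. fact (2*i)) * (\<Prod>i\<in>{1..m}. fact (2*(m+i)))"
    using prod_atLeastAtMost_add_split[of "\<lambda>i. fact (2*i)" m m] by (simp add: mult_2)
  then have "(\<Prod>i\<in>{1..2*m}. fact (2*i) :: int) = (2^m * fact m * Y) * X"
    unfolding prod_fact_evens_eq X_def Y_def by (simp add: algebra_simps)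
  ultimately have "[(X * Y) * ((\<Prod>i\<in>{1..2*m}. full_row p i) * (2^m * fact m)) = (X * Y) * (-1)^m] (mod int p)"
    by (simp add: ac_simps)
  moreover have "coprime (X * Y) (int p)"
    unfolding X_def Y_def coprime_mult_left_iff
    using assms by (intro conjI coprime_prod_fact) auto
  ultimately show ?thesis
    using cong_mult_lcancel by blast
qed

lemma half_rows_1mod4_cong:
  assumes "prime p" "p = 4*m + 1"
  shows "[(\<Prod>i\<in>{1..2*m}. half_row p i) * 3^m * fact (2*m) = 2^m * (-1)^m] (mod int p)"
proof -
  define P where "P = (\<Prod>i\<in>{1..2*m}. half_row p i)"
  define E where "E = (\<Prod>k\<in>{1..m}. row_surplus p (2*k - 1))"
  define Odds where "Odds = (\<Prod>k\<in>{1..m}. int (2*k - 1))"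
  have "p > 3" using assms prime_gt_1_nat[OF assms(1)] by auto
  moreover have "(p-1) div 2 = 2*m" using assms(2) by simp
  ultimately have full: "(\<Prod>i\<in>{1..2*m}. full_row p i) = P * E"
    using prod_full_rows_eq[OF assms(1)] prod_even_neutral[of "row_surplus p" m]
    by (simp add: P_def E_def row_surplus_def)
  have "P * 3^m * fact (2*m) = P * (3^m * Odds) * (2^m * fact m)"
    unfolding fact_double_eq_prod_odds Odds_def by (simp only: ac_simps)
  also have "[\<dots> = P * (2^m * E) * (2^m * fact m)] (mod int p)"
  proof -
    have "[3^m * Odds = 2^m * E] (mod int p)"
      using prod_row_surplus_cong[of p m] assms(2) unfolding E_def Odds_def by (simp add: cong_sym)
    then show ?thesis by (intro cong_mult[OF cong_mult[OF cong_refl] cong_refl])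
  qed
  also have "P * (2^m * E) * (2^m * fact m) = 2^m * ((\<Prod>i\<in>{1..2*m}. full_row p i) * (2^m * fact m))"
    unfolding full by (simp only: ac_simps)
  also have "[2^m * ((\<Prod>i\<in>{1..2*m}. full_row p i) * (2^m * fact m)) = 2^m * (-1)^m] (mod int p)"
    using prod_full_rows_1mod4_cong[OF assms] by (rule cong_scalar_left)
  finally show ?thesis unfolding P_def .
qed

lemma T_2_5_2_1mod4_cong:
  assumes "prime p" "p = 4*m + 1"
  shows "[T p 2 5 2 = - (6 ^ (2*m))] (mod int p)"
proof -
  define P where "P = (\<Prod>i\<in>{1..2*m}. half_row p i)"
  have "p > 3" using assms prime_gt_1_nat[OF assms(1)] by auto
  moreover have h: "(p-1) div 2 = 2*m" using assms(2) by simp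
  ultimately have T: "T p 2 5 2 = P^2"
    using T_2_5_2_eq_square[OF assms(1)] by (simp add: P_def)
  have "[(P * 3^m * fact (2*m))^2 = (2^m * (-1)^m)^2] (mod int p)"
    using half_rows_1mod4_cong[OF assms] unfolding P_def by (rule cong_pow)
  then have "[P^2 * 3^(2*m) * fact (2*m)^2 = 2^(2*m)] (mod int p)"
    by (simp add: power_mult_distrib power_mult[symmetric] mult.commute)
  moreover have "[fact (2*m)^2 = (-1::int)] (mod int p)"
    using fact_half_squared_cong[OF assms(1)] h assms(2) by simp
  ultimately have "[P^2 * 3^(2*m) * (-1) = 2^(2*m)] (mod int p)"
    by (metis cong_scalar_left cong_sym cong_trans)
  then have "[- (P^2 * 3^(2*m)) = 2^(2*m)] (mod int p)"
    by simp
  then have "[- (P^2 * 3^(2*m)) * 3^(2*m) = 2^(2*m) * 3^(2*m)] (mod int p)"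
    by (rule cong_scalar_right)
  moreover have "(3::int)^(4*m) = 3^(2*m) * 3^(2*m)"
    by (simp flip: power_add)
  then have "- (P^2 * 3^(2*m)) * 3^(2*m) = - (P^2 * 3^(4*m))"
    by (simp add: mult.assoc)
  moreover have "(2::int)^(2*m) * 3^(2*m) = 6^(2*m)"
    by (simp flip: power_mult_distrib)
  ultimately have "[- (P^2 * 3^(4*m)) = 6^(2*m)] (mod int p)"
    by (simp only:)
  moreover have "[3^(4*m) = (1::int)] (mod int p)"
    using fermat_theorem_int[OF assms(1), of 3] prime_gt_3_not_dvd[OF assms(1) \<open>p > 3\<close>] assms(2) by simp
  ultimately have "[- (P^2) = 6^(2*m)] (mod int p)"
    by (metis cong_scalar_left cong_sym cong_trans mult_1_right mult_minus_left)
  then show ?thesis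
    unfolding T by (metis cong_minus_minus_iff minus_minus)
qed

lemma sign_1mod4_eq:
  assumes "p = 4*m + 1" "p mod 3 \<noteq> 0"
  shows "- ((-1)^m * (if p mod 3 = 1 then 1 else -1)) = (-1::int) ^ ((p + 11) div 12)"
  using assms by (auto simp: minus_one_power_iff; presburger)

lemma T_2_5_2_1mod4:
  assumes "prime p" "p > 3" "p mod 4 = 1"
  shows "[T p 2 5 2 = (-1) ^ ((p + 11) div 12)] (mod int p)"
proof -
  define m where "m = p div 4"
  have p: "p = 4*m + 1" unfolding m_def using assms(3) by presburger
  have "[(3::int)^(2*m) = Legendre 3 (int p)] (mod int p)"
    using euler_criterion[OF assms(1), of 3] assms(2) p by (simp add: cong_sym)
  with pow_2_half_1mod4_cong[OF assms(1) p]
  have "[2^(2*m) * 3^(2*m) = (-1)^m * Legendre 3 (int p)] (mod int p)"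
    by (rule cong_mult)
  moreover have "(6::int)^(2*m) = 2^(2*m) * 3^(2*m)"
    by (simp flip: power_mult_distrib)
  ultimately have "[(6::int)^(2*m) = (-1)^m * Legendre 3 (int p)] (mod int p)"
    by simp
  then have "[- ((6::int)^(2*m)) = - ((-1)^m * Legendre 3 (int p))] (mod int p)"
    by (simp only: cong_minus_minus_iff)
  then have "[T p 2 5 2 = - ((-1)^m * Legendre 3 (int p))] (mod int p)"
    using T_2_5_2_1mod4_cong[OF assms(1) p] cong_trans by blast
  moreover have "\<not> 3 dvd p"
    using assms(1,2) prime_nat_iff[of p] by auto
  then have "p mod 3 \<noteq> 0"
    by presburger
  ultimately show ?thesis
    using Legendre_3_1mod4[OF assms] sign_1mod4_eq[OF p] by simp
qed

lemma T_2_neg5_2_1mod4: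
  assumes "prime p" "p > 3" "p mod 4 = 1"
  shows "[T p 2 (-5) 2 = (-1) ^ ((p + 11) div 12)] (mod int p)"
proof (rule cong_eq_of_mult_eq_one)
  have "even ((p-1) div 2)" using assms(3) by presburger
  then show "[T p 2 5 2 * T p 2 (-5) 2 = 1] (mod int p)"
    using T_2_5_2_mult_T_2_neg5_2_cong[OF assms(1,2)] by simp
  show "[T p 2 5 2 = (-1) ^ ((p + 11) div 12)] (mod int p)"
    using T_2_5_2_1mod4[OF assms] .
qed (simp flip: power_add)

section \<open>The case p = 3 (mod 4)\<close>

lemma prod_fact_residues_3mod4_eq:
  assumes "p = 4*m + 3"
  shows "(\<Prod>i\<in>{1..m+(m+1)}. if m + (m+1) + 2*i < p then fact (m + (m+1) + 2*i)
                                   else - fact (m + (m+1) + 2*i - p))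
         = ((\<Prod>i\<in>{1..m}. fact (2*i)) * (\<Prod>i\<in>{1..m}. fact (2*m + 2*i)))
           * ((-1)^(m+1) * (\<Prod>i\<in>{1..m}. int (2*m + 1 + 2*i)) :: int)"
proof -
  have C: "(\<Prod>i\<in>{1..m+1}. fact (2*i - 2) :: int) = (\<Prod>i\<in>{1..m}. fact (2*i))"
    using prod_atLeastAtMost_add_split[of "\<lambda>i. fact (2*i - 2) :: int" 1 m] by simp
  have "(\<Prod>i\<in>{1..m+(m+1)}. if m + (m+1) + 2*i < p then fact (m + (m+1) + 2*i)
                              else - fact (m + (m+1) + 2*i - p))
      = (\<Prod>i\<in>{1..m}. int (2*m + 1 + 2*i) * fact (2*m + 2*i)) * (\<Prod>i\<in>{1..m+1}. - fact (2*i - 2))"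
    unfolding prod_atLeastAtMost_add_split[of _ m "m+1"]
  proof (intro arg_cong2[where f=times] prod.cong refl)
    fix i assume "i \<in> {1..m}"
    then have "m + (m+1) + 2*i < p" "m + (m+1) + 2*i = Suc (2*m + 2*i)"
      using assms by auto
    then show "(if m + (m+1) + 2*i < p then fact (m + (m+1) + 2*i) else - fact (m + (m+1) + 2*i - p))
        = int (2*m + 1 + 2*i) * (fact (2*m + 2*i) :: int)"
      by (simp del: fact_Suc add: fact_Suc[of "2*m + 2*i"])
  next
    fix i assume "i \<in> {1..m+1}"
    then have "\<not> m + (m+1) + 2*(m+i) < p" "m + (m+1) + 2*(m+i) - p = 2*i - 2"
      using assms by auto
    then show "(if m + (m+1) + 2*(m+i) < p then fact (m + (m+1) + 2*(m+i))
        else - fact (m + (m+1) + 2*(m+i) - p)) = - (fact (2*i - 2) :: int)"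
      by simp
  qed
  then show ?thesis
    using C by (simp add: prod.distrib prod_uminus)
qed

lemma prod_full_rows_3mod4_cong:
  assumes "prime p" "p > 3" "p = 4*m + 3"
  shows "[(\<Prod>i\<in>{1..2*m+1}. full_row p i) = (-1)^m * (\<Prod>i\<in>{1..m}. int (2*m + 1 + 2*i))] (mod int p)"
proof -
  define A where "A = (\<Prod>i\<in>{1..m}. fact (2*m + 2*i) :: int)"
  define C where "C = (\<Prod>i\<in>{1..m}. fact (2*i) :: int)"
  define Q where "Q = (\<Prod>i\<in>{1..m}. int (2*m + 1 + 2*i))"
  define F where "F = (\<Prod>i\<in>{1..m+(m+1)}. full_row p i)"
  have h: "(p-1) div 2 = m + (m + 1)" using assms(3) by simp
  have F: "[F * (\<Prod>i\<in>{1..m+(m+1)}. fact (2*i)) = (C * A) * ((-1)^(m+1) * Q)] (mod int p)"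
    using prod_full_rows_cong[OF assms(1,2)]
    unfolding F_def h prod_fact_residues_3mod4_eq[OF assms(3)] A_def C_def Q_def .
  have evens: "(\<Prod>i\<in>{1..m+(m+1)}. fact (2*i) :: int) = (C * A) * fact (p - 1)"
    unfolding prod_atLeastAtMost_add_split[of _ m] prod_atLeastAtMost_add_split[of _ m 1]
    using assms(3) by (simp add: A_def C_def algebra_simps)
  have "[F * ((C * A) * fact (p - 1)) = (C * A) * (- F)] (mod int p)"
    using cong_scalar_left[OF wilson_theorem[OF assms(1)], of "F * (C * A)"] by (simp add: ac_simps)
  then have "[(C * A) * (- F) = (C * A) * ((-1)^(m+1) * Q)] (mod int p)"
    using F[unfolded evens] cong_sym cong_trans by blast
  moreover have "coprime (C * A) (int p)"
    unfolding A_def C_def coprime_mult_left_iff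
    using assms by (intro conjI coprime_prod_fact) auto
  ultimately have "[- F = (-1)^(m+1) * Q] (mod int p)"
    using cong_mult_lcancel by blast
  then have "[- F = - ((-1)^m * Q)] (mod int p)"
    by simp
  then have "[F = (-1)^m * Q] (mod int p)"
    by (simp only: cong_minus_minus_iff)
  moreover have "m + (m + 1) = 2*m + 1"
    by simp
  ultimately show ?thesis
    unfolding F_def Q_def by (simp only:)
qed

lemma prod_odds_pow4_cong:
  assumes "prime p" "p > 3" "p = 4*m + 3"
  shows "[(\<Prod>k\<in>{1..m+1}. int (2*k - 1))^4 = int ((2*m) choose m)^2] (mod int p)"
proof -
  define D where "D = (\<Prod>k\<in>{1..m+1}. int (2*k - 1))"
  define B where "B = int ((2*m) choose m)"
  have "D^4 * 4^(2*m+1) = 4 * (D^2 * 4^m)^2"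
    by (simp add: power_mult_distrib power_mult[symmetric] power_add algebra_simps)
  also have "\<dots> = (int p - 1)^2 * fact (2*m + 1)^2 * B^2"
    unfolding D_def B_def prod_odds_sq_eq using assms(3)
    by (simp add: power_mult_distrib power2_eq_square algebra_simps)
  finally have eq: "D^4 * 4^(2*m+1) = (int p - 1)^2 * fact (2*m + 1)^2 * B^2" .
  have "[(int p - 1)^2 * fact (2*m + 1)^2 * B^2 = 1 * 1 * B^2] (mod int p)"
  proof (intro cong_mult cong_refl)
    show "[(int p - 1)^2 = 1] (mod int p)"
      by (simp add: cong_iff_dvd_diff power2_eq_square algebra_simps)
    show "[fact (2*m + 1)^2 = (1::int)] (mod int p)"
      using fact_half_squared_cong[OF assms(1)] assms(3) by simp
  qed
  then have "[D^4 * 4^(2*m+1) = B^2] (mod int p)"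
    unfolding eq by simp
  moreover have "[D^4 * 4^(2*m+1) = D^4 * 1] (mod int p)"
  proof (intro cong_mult cong_refl)
    have "p - 1 = 2 * (2*m+1)"
      using assms(3) by simp
    then have "(4::int)^(2*m+1) = 2^(p-1)"
      by (simp add: power_mult)
    then show "[(4::int)^(2*m+1) = 1] (mod int p)"
      using fermat_theorem_int[OF assms(1)] prime_gt_3_not_dvd[OF assms(1,2)] by simp
  qed
  ultimately have "[B^2 = D^4 * 1] (mod int p)"
    by (rule cong_trans[OF cong_sym])
  then show ?thesis
    unfolding D_def B_def by (simp add: cong_sym_eq)
qed

lemma half_rows_3mod4_cong:
  assumes "prime p" "p > 3" "p = 4*m + 3"
  shows "[(\<Prod>i\<in>{1..2*m+1}. half_row p i) * 3^(m+1) * (\<Prod>k\<in>{1..m+1}. int (2*k - 1))^2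
          = (-1)^m * 2^(m+1) * (\<Prod>k\<in>{1..2*m+1}. int (2*k - 1))] (mod int p)"
proof -
  define P where "P = (\<Prod>i\<in>{1..2*m+1}. half_row p i)"
  define E where "E = (\<Prod>k\<in>{1..m+1}. row_surplus p (2*k - 1))"
  define D where "D = (\<Prod>k\<in>{1..m+1}. int (2*k - 1))"
  define Q where "Q = (\<Prod>i\<in>{1..m}. int (2*m + 1 + 2*i))"
  have "(\<Prod>i\<in>{1..2*m+1}. row_surplus p i) = (\<Prod>i\<in>{1..2*(m+1)}. row_surplus p i)"
    by (simp add: row_surplus_def)
  also have "\<dots> = E"
    unfolding E_def by (rule prod_even_neutral) (simp add: row_surplus_def)
  finally have "(\<Prod>i\<in>{1..2*m+1}. full_row p i) = P * E"
    using prod_full_rows_eq[OF assms(1,2)] assms(3) by (simp add: P_def)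
  then have PE: "[P * E = (-1)^m * Q] (mod int p)"
    using prod_full_rows_3mod4_cong[OF assms] by (simp add: Q_def)
  have "(\<Prod>i\<in>{1..m}. int (2*(m + 1 + i) - 1)) = Q"
    unfolding Q_def by (intro prod.cong) auto
  moreover have "2*m + 1 = (m + 1) + m"
    by simp
  ultimately have DQ: "D * Q = (\<Prod>k\<in>{1..2*m+1}. int (2*k - 1))"
    unfolding D_def by (simp only: prod_atLeastAtMost_add_split)
  have "P * 3^(m+1) * D^2 = P * (3^(m+1) * D) * D"
    by (simp add: power2_eq_square)
  also have "[P * (3^(m+1) * D) * D = P * (2^(m+1) * E) * D] (mod int p)"
  proof -
    have "[3^(m+1) * D = 2^(m+1) * E] (mod int p)"
      using prod_row_surplus_cong[of p "m+1"] assms(3) unfolding E_def D_def by (simp add: cong_sym)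
    then show ?thesis by (intro cong_mult[OF cong_mult[OF cong_refl] cong_refl])
  qed
  also have "P * (2^(m+1) * E) * D = 2^(m+1) * (P * E) * D"
    by (simp only: ac_simps)
  also have "[2^(m+1) * (P * E) * D = 2^(m+1) * ((-1)^m * Q) * D] (mod int p)"
    using PE by (intro cong_mult[OF cong_mult[OF cong_refl] cong_refl])
  also have "2^(m+1) * ((-1)^m * Q) * D = (-1)^m * 2^(m+1) * (\<Prod>k\<in>{1..2*m+1}. int (2*k - 1))"
    unfolding DQ[symmetric] by (simp only: ac_simps)
  finally show ?thesis
    unfolding P_def D_def .
qed

lemma T_2_5_2_3mod4_cong:
  assumes "prime p" "p > 3" "p = 4*m + 3"
  shows "[3 * int ((2*m) choose m)^2 * T p 2 5 2 = 2 * 6^(2*m+1)] (mod int p)"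
proof -
  define P where "P = (\<Prod>i\<in>{1..2*m+1}. half_row p i)"
  define D where "D = (\<Prod>k\<in>{1..m+1}. int (2*k - 1))"
  define Odds where "Odds = (\<Prod>k\<in>{1..2*m+1}. int (2*k - 1))"
  define B where "B = int ((2*m) choose m)"
  have h: "(p-1) div 2 = 2*m + 1" using assms(3) by simp
  have "[(P * 3^(m+1) * D^2)^2 = ((-1)^m * 2^(m+1) * Odds)^2] (mod int p)"
    using half_rows_3mod4_cong[OF assms] unfolding P_def D_def Odds_def by (rule cong_pow)
  then have sq: "[P^2 * 3^(2*m+2) * D^4 = 2^(2*m+2) * Odds^2] (mod int p)"
    by (simp add: power_mult_distrib flip: power_mult) (simp add: mult.commute)
  have odds: "[Odds^2 = 1] (mod int p)"
    using prod_odds_half_squared_cong[OF assms(1)] assms(2) h by (simp add: Odds_def)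
  have "(3::int)^(2*m+2) * 3^(2*m+1) = 3 * 3^(p-1)"
    using assms(3) by (simp flip: power_add power_Suc)
  then have "3 * B^2 * P^2 * 3^(p-1) = P^2 * 3^(2*m+2) * B^2 * 3^(2*m+1)"
    by (simp add: ac_simps)
  also have "[P^2 * 3^(2*m+2) * B^2 * 3^(2*m+1) = P^2 * 3^(2*m+2) * D^4 * 3^(2*m+1)] (mod int p)"
    using prod_odds_pow4_cong[OF assms] unfolding D_def B_def
    by (rule cong_mult[OF cong_mult[OF cong_refl cong_sym] cong_refl])
  also have "[P^2 * 3^(2*m+2) * D^4 * 3^(2*m+1) = 2^(2*m+2) * Odds^2 * 3^(2*m+1)] (mod int p)"
    using sq by (rule cong_mult[OF _ cong_refl])
  also have "[2^(2*m+2) * Odds^2 * 3^(2*m+1) = 2^(2*m+2) * 1 * 3^(2*m+1)] (mod int p)"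
    using odds by (intro cong_mult[OF cong_mult[OF cong_refl] cong_refl])
  also have "(2::int)^(2*m+2) * 1 * 3^(2*m+1) = 2 * 6^(2*m+1)"
    by (simp flip: power_mult_distrib)
  finally have main: "[3 * B^2 * P^2 * 3^(p-1) = 2 * 6^(2*m+1)] (mod int p)" .
  have "[3 * B^2 * P^2 * 3^(p-1) = 3 * B^2 * P^2 * 1] (mod int p)"
    using fermat_theorem_int[OF assms(1)] prime_gt_3_not_dvd[OF assms(1,2)]
    by (intro cong_mult[OF cong_refl]) simp
  then have "[3 * B^2 * P^2 = 2 * 6^(2*m+1)] (mod int p)"
    using cong_trans[OF cong_sym main] by simp
  moreover have "T p 2 5 2 = P^2"
    using T_2_5_2_eq_square[OF assms(1,2)] h by (simp add: P_def)
  ultimately show ?thesis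
    unfolding B_def by simp
qed

lemma T_2_5_2_3mod4:
  assumes "prime p" "p > 3" "p mod 4 = 3"
  shows "[3 * int (((p - 3) div 2) choose ((p - 3) div 4))^2 * T p 2 5 2 = Legendre 6 (int p) * 2] (mod int p)"
proof -
  define m where "m = p div 4"
  have p: "p = 4*m + 3" unfolding m_def using assms(3) by presburger
  have "(p - 3) div 2 = 2*m" "(p - 3) div 4 = m"
    using p by simp_all
  then have "[3 * int (((p - 3) div 2) choose ((p - 3) div 4))^2 * T p 2 5 2 = 2 * 6^(2*m+1)] (mod int p)"
    using T_2_5_2_3mod4_cong[OF assms(1,2) p] by simp
  also have "[2 * 6^(2*m+1) = 2 * Legendre 6 (int p)] (mod int p)"
    using euler_criterion[OF assms(1), of 6] assms(2) p by (intro cong_scalar_left) (simp add: cong_sym)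
  finally show ?thesis
    by (simp add: mult.commute)
qed

lemma T_2_neg5_2_3mod4:
  assumes "prime p" "p > 3" "p mod 4 = 3"
  shows "[2 * T p 2 (-5) 2 = Legendre 6 (int p) * (-1) * 3 * int (((p - 3) div 2) choose ((p - 3) div 4))^2]
           (mod int p)"
proof -
  define B where "B = int (((p - 3) div 2) choose ((p - 3) div 4))"
  define L where "L = Legendre 6 (int p)"
  have "L = 1 \<or> L = -1"
    using prime_gt_3_not_dvd[OF assms(1,2)] by (auto simp: L_def Legendre_def cong_0_iff)
  then have L: "L * L = 1" by auto
  have "odd ((p-1) div 2)" using assms(3) by presburger
  then have "[T p 2 5 2 * T p 2 (-5) 2 = -1] (mod int p)"
    using T_2_5_2_mult_T_2_neg5_2_cong[OF assms(1,2)] by simp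
  then have "[3 * B^2 * T p 2 5 2 * T p 2 (-5) 2 = 3 * B^2 * (-1)] (mod int p)"
    unfolding mult.assoc[of "3 * B^2"] by (rule cong_scalar_left)
  moreover have "[3 * B^2 * T p 2 5 2 * T p 2 (-5) 2 = L * 2 * T p 2 (-5) 2] (mod int p)"
    using T_2_5_2_3mod4[OF assms] unfolding B_def L_def by (rule cong_scalar_right)
  ultimately have "[L * 2 * T p 2 (-5) 2 = 3 * B^2 * (-1)] (mod int p)"
    using cong_sym cong_trans by blast
  then have "[L * (L * 2 * T p 2 (-5) 2) = L * (3 * B^2 * (-1))] (mod int p)"
    by (rule cong_scalar_left)
  moreover have "L * (L * 2 * T p 2 (-5) 2) = (L * L) * (2 * T p 2 (-5) 2)"
    and "L * (3 * B^2 * (-1)) = L * (-1) * 3 * B^2"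
    by (simp_all only: ac_simps)
  ultimately have "[(L * L) * (2 * T p 2 (-5) 2) = L * (-1) * 3 * B^2] (mod int p)"
    by (simp only:)
  then have "[2 * T p 2 (-5) 2 = L * (-1) * 3 * B^2] (mod int p)"
    unfolding L mult_1 .
  then show ?thesis
    unfolding B_def L_def .
qed

theorem theorem1p6:
  fixes p :: nat and \<delta> :: int
  assumes "prime p" and "p > 3" and "\<delta> \<in> {1, -1}"
  shows "(p mod 4 = 1 \<longrightarrow>
            [T p 2 (5 * \<delta>) 2 = (-1) ^ ((p + 11) div 12)] (mod int p))
       \<and> (p mod 4 = 3 \<longrightarrow>
            (let B = int (((p - 3) div 2) choose ((p - 3) div 4)) in
              (\<delta> = 1 \<longrightarrow>
                 [3 * B^2 * T p 2 (5 * \<delta>) 2 = Legendre 6 (int p) * 2] (mod int p))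
            \<and> (\<delta> = -1 \<longrightarrow>
                 [2 * T p 2 (5 * \<delta>) 2 = Legendre 6 (int p) * (-1) * 3 * B^2] (mod int p))))"
  using assms T_2_5_2_1mod4 T_2_neg5_2_1mod4 T_2_5_2_3mod4 T_2_neg5_2_3mod4
  by (auto simp: Let_def)

end
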